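(* The quantities $R_{n,k}$, $r_{n,k}$ satisfy the system of difference equations \[ r_{n+1,k}=\Big(t_k-\sum_{j=1}^m t_jR_{n,j}-2n-1-\alpha\Big)R_{n,k}-r_{n,k},\qquad k=1,\dots,m, \] \[ \frac1{R_{n,1}}=1+\frac{R_{n-1,1}}{r_{n,1}^2}\left[\sum_{k=2}^m\frac{r_{n,k}^2}{R_{n-1,k}}+\frac{\big(n+\alpha+\sum_{k=1}^m r_{n,k}\big)\big(n+\sum_{k=1}^m r_{n,k}\big)}{1-\sum_{k=1}^mR_{n-1,k}}\right], \] \[ R_{n,k}=\frac{R_{n-1,1}}{R_{n-1,k}}\cdot\frac{r_{n,k}^2}{r_{n,1}^2}\cdot R_{n,1},\qquad k=2,\dots,m, \] with initial conditions $R_{0,k}=\frac{\omega_kt_k^\alpha e^{-t_k}}{\int_0^\infty w(x;\vec t)dx}$, $r_{0,k}=0$.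
   Context: Let $m\ge1$, $\alpha>-1$, $0<t_1<\dots<t_m$, real $\omega_0,\dots,\omega_m$ with $\sum_{k=0}^\ell\omega_k\ge0$ for $\ell=0,\dots,m$, $\theta$ the Heaviside function, $w_0(x)=x^\alpha e^{-x}$, $w(x;\vec t)=w_0(x)\big(\omega_0+\sum_k\omega_k\theta(x-t_k)\big)$ on $[0,\infty)$, $P_n$ the monic orthogonal polynomials w.r.t. $w$ ($P_0=1$), $h_n=\int_0^\infty P_n^2w\,dx$, $R_{n,k}=\omega_k\frac{w_0(t_k)}{h_n}P_n^2(t_k)$, $r_{n,k}=\omega_k\frac{w_0(t_k)}{h_{n-1}}P_n(t_k)P_{n-1}(t_k)$ (with $r_{0,k}=0$). *)

theory Defs
  imports "HOL-Analysis.Analysis" "HOL-Computational_Algebra.Polynomial"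
begin

definition w0 :: "real \<Rightarrow> real \<Rightarrow> real" where
  "w0 \<alpha> x = x powr \<alpha> * exp (- x)"

text \<open>Heaviside function (the value at 0 is irrelevant: it only enters integrals).\<close>
definition heaviside :: "real \<Rightarrow> real" where
  "heaviside y = (if y \<ge> 0 then 1 else 0)"

definition weight :: "real \<Rightarrow> nat \<Rightarrow> (nat \<Rightarrow> real) \<Rightarrow> (nat \<Rightarrow> real) \<Rightarrow> real \<Rightarrow> real" where
  "weight \<alpha> m \<omega> t x = w0 \<alpha> x * (\<omega> 0 + (\<Sum>k=1..m. \<omega> k * heaviside (x - t k)))"

definition wint :: "real \<Rightarrow> nat \<Rightarrow> (nat \<Rightarrow> real) \<Rightarrow> (nat \<Rightarrow> real) \<Rightarrow> (real \<Rightarrow> real) \<Rightarrow> real" where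
  "wint \<alpha> m \<omega> t f = (LINT x:{0..}|lborel. f x * weight \<alpha> m \<omega> t x)"

definition monic_OPs :: "real \<Rightarrow> nat \<Rightarrow> (nat \<Rightarrow> real) \<Rightarrow> (nat \<Rightarrow> real) \<Rightarrow> (nat \<Rightarrow> real poly) \<Rightarrow> bool" where
  "monic_OPs \<alpha> m \<omega> t P \<longleftrightarrow>
     (\<forall>n. degree (P n) = n \<and> lead_coeff (P n) = 1 \<and>
          (\<forall>j<n. wint \<alpha> m \<omega> t (\<lambda>x. poly (P n) x * x ^ j) = 0))"

definition hn :: "real \<Rightarrow> nat \<Rightarrow> (nat \<Rightarrow> real) \<Rightarrow> (nat \<Rightarrow> real) \<Rightarrow> (nat \<Rightarrow> real poly) \<Rightarrow> nat \<Rightarrow> real" where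
  "hn \<alpha> m \<omega> t P n = wint \<alpha> m \<omega> t (\<lambda>x. (poly (P n) x)\<^sup>2)"

definition Rnk :: "real \<Rightarrow> nat \<Rightarrow> (nat \<Rightarrow> real) \<Rightarrow> (nat \<Rightarrow> real) \<Rightarrow> (nat \<Rightarrow> real poly) \<Rightarrow> nat \<Rightarrow> nat \<Rightarrow> real" where
  "Rnk \<alpha> m \<omega> t P n k = \<omega> k * w0 \<alpha> (t k) / hn \<alpha> m \<omega> t P n * (poly (P n) (t k))\<^sup>2"

definition rnk :: "real \<Rightarrow> nat \<Rightarrow> (nat \<Rightarrow> real) \<Rightarrow> (nat \<Rightarrow> real) \<Rightarrow> (nat \<Rightarrow> real poly) \<Rightarrow> nat \<Rightarrow> nat \<Rightarrow> real" where
  "rnk \<alpha> m \<omega> t P n k = (if n = 0 then 0 else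
     \<omega> k * w0 \<alpha> (t k) / hn \<alpha> m \<omega> t P (n - 1) * poly (P n) (t k) * poly (P (n - 1)) (t k))"

end

theory Submission
  imports Defs "HOL-Real_Asymp.Real_Asymp"
begin

text \<open>
  The functional L p = \<integral> p w over [0, \<infinity>) is positive on polynomials that are nonnegative
  there, so the monic orthogonal polynomials obey a three-term recurrence
  x P_n = P_(n+1) + a_n P_n + b_n P_(n-1) with b_n = h_n / h_(n-1). Integrating (x w g)' by
  parts turns the jumps of w into point evaluations at the t_k (a Pearson identity). For
  g = P_n^2 it gives a_n = 2n + 1 + \<alpha> + \<Sum>_j t_j R_(n,j), and evaluating the recurrence at
  t_k yields the first equation. Applied to P_n^2 and P_n P_(n-1), together with a Casoratian
  identity for the values P_n(0) (which never vanish), it expresses 1 - \<Sum>_k R_(n,k),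
  n + \<alpha> + \<Sum>_k r_(n,k) and n + \<Sum>_k r_(n,k) through P_n(0) and P_(n-1)(0), whence
  (n + \<alpha> + \<Sum>_k r_(n,k)) (n + \<Sum>_k r_(n,k)) = b_n (1 - \<Sum>_k R_(n,k)) (1 - \<Sum>_k R_(n-1,k)).
  With r_(n,k)^2 = b_n R_(n,k) R_(n-1,k), elementary algebra gives the other two equations.
\<close>

section \<open>Polynomials of bounded degree\<close>

definition deg_below :: "'a::zero poly \<Rightarrow> nat \<Rightarrow> bool" where
  "deg_below p n \<longleftrightarrow> (\<forall>j\<ge>n. coeff p j = 0)"

lemma deg_below_iff: "deg_below p n \<longleftrightarrow> p = 0 \<or> degree p < n"
proof
  assume "deg_below p n"
  then have "coeff p (degree p) = 0" if "n \<le> degree p"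
    using that by (simp add: deg_below_def)
  then show "p = 0 \<or> degree p < n"
    by (meson leading_coeff_0_iff not_le)
next
  assume "p = 0 \<or> degree p < n"
  then show "deg_below p n"
    by (auto simp: deg_below_def intro: coeff_eq_0)
qed

lemma deg_below_mono: "deg_below p n \<Longrightarrow> n \<le> k \<Longrightarrow> deg_below p k"
  by (simp add: deg_below_def)

lemma deg_below_add: "deg_below p n \<Longrightarrow> deg_below q n \<Longrightarrow> deg_below (p + q) n"
  by (simp add: deg_below_def)

lemma deg_below_diff: "deg_below p n \<Longrightarrow> deg_below q n \<Longrightarrow> deg_below (p - q) n"
  by (simp add: deg_below_def)

lemma deg_below_smult: "deg_below p n \<Longrightarrow> deg_below (smult c p) n"
  by (simp add: deg_below_def)

lemma deg_below_pCons: "deg_below p n \<Longrightarrow> deg_below (pCons a p) (Suc n)"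
  by (auto simp: deg_below_def coeff_pCons')

lemma deg_below_pderiv: "deg_below p (Suc n) \<Longrightarrow> deg_below (pderiv p) n"
  by (simp add: deg_below_def coeff_pderiv)

lemma deg_below_diff_same_coeff:
  assumes "deg_below p (Suc n)" and "deg_below q (Suc n)" and "coeff p n = coeff q n"
  shows "deg_below (p - q) n"
  unfolding deg_below_def
proof (intro allI impI)
  fix j assume "n \<le> j"
  then consider "j = n" | "Suc n \<le> j"
    by linarith
  then show "coeff (p - q) j = 0"
    using assms by cases (simp_all add: deg_below_def)
qed

lemma deg_below_eq_sum_monom: "deg_below p n \<Longrightarrow> p = (\<Sum>i<n. monom (coeff p i) i)"
  by (rule poly_eqI) (auto simp: deg_below_def coeff_sum)

lemma pCons_poly_0_synthetic_div: "pCons (poly p 0) (synthetic_div p 0) = p"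
  using synthetic_div_correct[of p 0] by simp

lemma coeff_synthetic_div_0: "coeff (synthetic_div p 0) j = coeff p (Suc j)"
  using arg_cong[OF pCons_poly_0_synthetic_div[of p], of "\<lambda>q. coeff q (Suc j)"] by simp

lemma deg_below_synthetic_div_0: "deg_below p (Suc n) \<Longrightarrow> deg_below (synthetic_div p 0) n"
  by (simp add: deg_below_def coeff_synthetic_div_0)

section \<open>Orthogonal polynomials of a positive functional\<close>

locale positive_poly_functional =
  fixes L :: "real poly \<Rightarrow> real"
  assumes L_add: "L (p + q) = L p + L q"
    and L_smult: "L (smult c p) = c * L p"
    and L_pos: "p \<noteq> 0 \<Longrightarrow> (\<And>x. 0 \<le> x \<Longrightarrow> 0 \<le> poly p x) \<Longrightarrow> 0 < L p"
begin

lemma L_0 [simp]: "L 0 = 0"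
  using L_smult[of 0 0] by simp

lemma L_diff: "L (p - q) = L p - L q"
  using L_add[of "p - q" q] by simp

lemma L_sum: "L (\<Sum>i\<in>I. f i) = (\<Sum>i\<in>I. L (f i))"
  by (induction I rule: infinite_finite_induct) (simp_all add: L_add)

lemma L_square_eq_0_iff: "L (p * p) = 0 \<longleftrightarrow> p = 0"
proof
  assume "L (p * p) = 0"
  then show "p = 0"
    using L_pos[of "p * p"] by (metis less_irrefl mult_eq_0_iff poly_mult zero_le_square)
qed simp

end

locale monic_orthogonal_polys = positive_poly_functional +
  fixes P :: "nat \<Rightarrow> real poly"
  assumes degree_P: "degree (P n) = n"
    and lead_coeff_P: "lead_coeff (P n) = 1"
    and orthogonal_monom: "j < n \<Longrightarrow> L (P n * monom 1 j) = 0"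
begin

lemma coeff_P_self [simp]: "coeff (P n) n = 1"
  using lead_coeff_P[of n] by (simp add: degree_P)

lemma P_nonzero: "P n \<noteq> 0"
  by (metis coeff_0 coeff_P_self zero_neq_one)

lemma deg_below_P: "deg_below (P n) (Suc n)"
  by (simp add: deg_below_iff degree_P)

lemma P_0: "P 0 = 1"
  using degree_P[of 0] coeff_P_self[of 0] by (metis One_nat_def degree_0_id pCons_one)

lemma L_P_mult_eq_0: "deg_below q n \<Longrightarrow> L (P n * q) = 0"
proof -
  assume "deg_below q n"
  then have "P n * q = (\<Sum>i<n. smult (coeff q i) (P n * monom 1 i))"
    by (subst deg_below_eq_sum_monom) (simp_all add: sum_distrib_left smult_monom flip: mult_smult_right)
  then show ?thesis
    by (simp add: L_sum L_smult orthogonal_monom)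
qed

definition h :: "nat \<Rightarrow> real" where
  "h n = L (P n * P n)"

lemma h_pos: "0 < h n"
  unfolding h_def using L_pos[of "P n * P n"] by (simp add: P_nonzero)

lemma L_P_mult_eq_coeff: "deg_below q (Suc n) \<Longrightarrow> L (P n * q) = coeff q n * h n"
proof -
  assume "deg_below q (Suc n)"
  then have "deg_below (q - smult (coeff q n) (P n)) n"
    by (intro deg_below_diff_same_coeff deg_below_smult deg_below_P) simp_all
  then have "L (P n * (q - smult (coeff q n) (P n))) = 0"
    by (rule L_P_mult_eq_0)
  then show ?thesis
    by (simp add: right_diff_distrib L_diff L_smult h_def)
qed

lemma orthogonal_deg_below_Suc:
  assumes "L (E * P n) = 0" and "\<And>q. deg_below q n \<Longrightarrow> L (E * q) = 0" and "deg_below q (Suc n)"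
  shows "L (E * q) = 0"
proof -
  have "deg_below (q - smult (coeff q n) (P n)) n"
    using assms(3) by (intro deg_below_diff_same_coeff deg_below_smult deg_below_P) simp_all
  then have "L (E * (q - smult (coeff q n) (P n))) = 0"
    by (rule assms(2))
  then show ?thesis
    using assms(1) by (simp add: right_diff_distrib L_diff L_smult)
qed

lemma eq_0_if_orthogonal_deg_below:
  "deg_below E n \<Longrightarrow> (\<And>q. deg_below q n \<Longrightarrow> L (E * q) = 0) \<Longrightarrow> E = 0"
  using L_square_eq_0_iff by blast

lemma eq_0_if_orthogonal_P_P_pred:
  assumes "deg_below E (Suc n)" and "L (E * P n) = 0" and "L (E * P (n - 1)) = 0"
    and "\<And>q. deg_below q (n - 1) \<Longrightarrow> L (E * q) = 0"
  shows "E = 0"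
proof (rule eq_0_if_orthogonal_deg_below[OF assms(1)])
  have "L (E * q) = 0" if "deg_below q n" for q
  proof -
    have "deg_below q (Suc (n - 1))"
      using that by (rule deg_below_mono) simp
    then show ?thesis
      using orthogonal_deg_below_Suc[of E "n - 1" q] assms(3,4) by blast
  qed
  then show "L (E * q) = 0" if "deg_below q (Suc n)" for q
    using orthogonal_deg_below_Suc[of E n q] assms(2) that by blast
qed

lemma L_P_Suc_mult_pCons_0_P: "L (P (Suc n) * pCons 0 (P n)) = h (Suc n)"
  using L_P_mult_eq_coeff[OF deg_below_pCons[OF deg_below_P[of n]], of 0] by simp

definition a :: "nat \<Rightarrow> real" where
  "a n = L (pCons 0 (P n * P n)) / h n"

text \<open>With b 0 = 0 the recurrence also holds for n = 0, where P (n - 1) is P 0.\<close>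

definition b :: "nat \<Rightarrow> real" where
  "b n = (if n = 0 then 0 else h n / h (n - 1))"

lemma b_nonzero: "0 < n \<Longrightarrow> b n \<noteq> 0"
  using h_pos[of n] h_pos[of "n - 1"] by (simp add: b_def)

lemma three_term_recurrence: "P (Suc n) = pCons 0 (P n) - smult (a n) (P n) - smult (b n) (P (n - 1))"
proof -
  define E where "E = P (Suc n) - pCons 0 (P n) + smult (a n) (P n) + smult (b n) (P (n - 1))"
  have L_E: "L (E * q)
      = L (P (Suc n) * q) - L (P n * pCons 0 q) + a n * L (P n * q) + b n * L (P (n - 1) * q)" for q
    by (simp add: E_def algebra_simps L_add L_diff L_smult)
  have P_P_pred: "L (P n * P (n - 1)) = 0" if "n \<noteq> 0"
    using that by (intro L_P_mult_eq_0 deg_below_mono[OF deg_below_P]) simp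
  have "deg_below (P (Suc n) - pCons 0 (P n)) (Suc n)"
    by (rule deg_below_diff_same_coeff[OF deg_below_P deg_below_pCons[OF deg_below_P]]) simp
  moreover have "deg_below (P (n - 1)) (Suc n)"
    using deg_below_P by (rule deg_below_mono) simp
  ultimately have "deg_below E (Suc n)"
    unfolding E_def by (intro deg_below_add deg_below_smult deg_below_P)
  moreover have E_P: "L (E * P n) = 0"
  proof -
    have "a n * h n = L (P n * pCons 0 (P n))"
      using h_pos[of n] by (simp add: a_def)
    moreover have "b n * L (P (n - 1) * P n) = 0"
      using P_P_pred by (simp add: b_def mult.commute)
    moreover have "L (P (Suc n) * P n) = 0"
      by (rule L_P_mult_eq_0[OF deg_below_P])
    ultimately show ?thesis
      unfolding L_E h_def by simp
  qed
  moreover have "L (E * P (n - 1)) = 0"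
  proof (cases n)
    case (Suc k)
    have "b n * h k = h n"
      using h_pos[of k] Suc by (simp add: b_def)
    moreover have "L (P (Suc n) * P k) = 0"
      by (intro L_P_mult_eq_0 deg_below_mono[OF deg_below_P]) (simp add: Suc)
    ultimately show ?thesis
      unfolding L_E using L_P_Suc_mult_pCons_0_P[of k] P_P_pred Suc by (simp add: h_def[symmetric])
  qed (use E_P in simp)
  moreover have "L (E * q) = 0" if "deg_below q (n - 1)" for q
  proof -
    have "deg_below q n" "deg_below q (Suc n)"
      using deg_below_mono[OF that] by simp_all
    moreover have "deg_below (pCons 0 q) n"
      using that by (auto simp: deg_below_def coeff_pCons')
    ultimately show ?thesis
      unfolding L_E using that by (simp only: L_P_mult_eq_0)
  qed
  ultimately have "E = 0"
    by (rule eq_0_if_orthogonal_P_P_pred)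
  then show ?thesis
    by (simp add: E_def algebra_simps)
qed

lemma deg_below_synthetic_div_P: "deg_below (synthetic_div (P n) 0) n"
  by (rule deg_below_synthetic_div_0[OF deg_below_P])

lemma coeff_synthetic_div_P: "0 < n \<Longrightarrow> coeff (synthetic_div (P n) 0) (n - 1) = 1"
  by (simp add: coeff_synthetic_div_0)

lemma P_eval: "poly (P n) x = poly (P n) 0 + x * poly (synthetic_div (P n) 0) x"
  using arg_cong[OF pCons_poly_0_synthetic_div[of "P n"], of "\<lambda>p. poly p x"] by simp

lemma poly_P_0_nonzero: "poly (P n) 0 \<noteq> 0"
proof
  assume "poly (P n) 0 = 0"
  define q where "q = synthetic_div (P n) 0"
  have P_eq: "P n = pCons 0 q"
    using pCons_poly_0_synthetic_div[of "P n"] \<open>poly (P n) 0 = 0\<close> by (simp add: q_def)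
  then have "P n * q \<noteq> 0"
    using P_nonzero[of n] by auto
  moreover have "0 \<le> poly (P n * q) x" if "0 \<le> x" for x
    using that by (simp add: P_eq)
  ultimately have "0 < L (P n * q)"
    by (rule L_pos)
  moreover have "L (P n * q) = 0"
    unfolding q_def by (rule L_P_mult_eq_0[OF deg_below_synthetic_div_P])
  ultimately show False
    by simp
qed

lemma L_synthetic_div_P_casoratian:
  assumes "0 < n"
  shows "poly (P (n - 1)) 0 * L (synthetic_div (P n) 0) - poly (P n) 0 * L (synthetic_div (P (n - 1)) 0)
    = h (n - 1)"
proof -
  define e where "e j = poly (P j) 0" for j
  define Q where "Q j = synthetic_div (P j) 0" for j
  have eval: "poly (P j) x = e j + x * poly (Q j) x" for j x
    unfolding e_def Q_def by (rule P_eval)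
  define H where "H = smult (e (n - 1)) (Q n) - smult (e n) (Q (n - 1))"
  \<comment> \<open>x H = e (n - 1) P n - e n P (n - 1), so H has degree n - 1 and leading coefficient e (n - 1)\<close>
  have "deg_below (Q n) (Suc (n - 1))" "deg_below (Q (n - 1)) (Suc (n - 1))"
    using assms deg_below_mono[OF deg_below_synthetic_div_P[of "n - 1"]]
    by (simp_all add: Q_def deg_below_synthetic_div_P)
  then have "deg_below H (Suc (n - 1))"
    unfolding H_def by (intro deg_below_diff deg_below_smult)
  moreover have "coeff H (n - 1) = e (n - 1)"
    using deg_below_synthetic_div_P[of "n - 1"] coeff_synthetic_div_P[OF assms]
    by (simp add: H_def Q_def deg_below_def)
  ultimately have top: "L (P (n - 1) * H) = e (n - 1) * h (n - 1)"
    by (simp add: L_P_mult_eq_coeff)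
  have "P (n - 1) * H = smult (e (n - 1)) (H + P n * Q (n - 1)) - smult (e n) (P (n - 1) * Q (n - 1))"
    by (rule poly_ext) (simp add: H_def eval algebra_simps)
  moreover have "L (P n * Q (n - 1)) = 0" "L (P (n - 1) * Q (n - 1)) = 0"
    using deg_below_mono[OF deg_below_synthetic_div_P[of "n - 1"], of n]
    by (simp_all add: Q_def L_P_mult_eq_0 deg_below_synthetic_div_P)
  ultimately have "L (P (n - 1) * H) = e (n - 1) * L H"
    by (simp add: L_add L_diff L_smult)
  then have "L H = h (n - 1)"
    using top poly_P_0_nonzero[of "n - 1"] by (simp add: e_def)
  then show ?thesis
    by (simp add: H_def L_diff L_smult e_def Q_def)
qed

lemma L_P_mult_pCons_0_pderiv: "L (P n * pCons 0 (pderiv (P n))) = real n * h n"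
proof -
  have "deg_below (pCons 0 (pderiv (P n))) (Suc n)"
    by (intro deg_below_pCons deg_below_pderiv deg_below_P)
  then have "L (P n * pCons 0 (pderiv (P n))) = coeff (pCons 0 (pderiv (P n))) n * h n"
    by (rule L_P_mult_eq_coeff)
  also have "coeff (pCons 0 (pderiv (P n))) n = real n"
    by (cases n) (simp_all add: coeff_pderiv)
  finally show ?thesis .
qed

lemma L_P_pred_mult_pderiv: "0 < n \<Longrightarrow> L (P (n - 1) * pderiv (P n)) = real n * h (n - 1)"
  using L_P_mult_eq_coeff[of "pderiv (P n)" "n - 1"] deg_below_pderiv[OF deg_below_P[of n]]
  by (simp add: coeff_pderiv)

end

section \<open>A Pearson identity with point masses\<close>

text \<open>
  Weak form of the Pearson equation (x w)' = (\<alpha> + 1 - x) w + \<Sum>_k d_k \<tau>_k \<delta>_(\<tau>_k) of a weight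
  w = x^\<alpha> e^(-x) \<psi> with \<psi> a step function: d_k is \<tau>_k^\<alpha> e^(-\<tau>_k) times the jump of \<psi> at \<tau>_k.
\<close>

locale laguerre_type_functional = monic_orthogonal_polys +
  fixes \<alpha> :: real and K :: "nat set" and d \<tau> :: "nat \<Rightarrow> real"
  assumes pearson:
    "L ([:\<alpha> + 1, -1:] * g + pCons 0 (pderiv g)) = - (\<Sum>k\<in>K. d k * \<tau> k * poly g (\<tau> k))"
begin

definition c :: real where
  "c = L 1 - (\<Sum>k\<in>K. d k)"

text \<open>By pearson_pCons below, \<sigma> n = L (P n) - L (pderiv (P n)) - (\<Sum>k\<in>K. d k * poly (P n) (\<tau> k)).\<close>

definition \<sigma> :: "nat \<Rightarrow> real" where
  "\<sigma> n = \<alpha> * L (synthetic_div (P n) 0) + poly (P n) 0 * c"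

definition R :: "nat \<Rightarrow> nat \<Rightarrow> real" where
  "R n k = d k / h n * (poly (P n) (\<tau> k))\<^sup>2"

text \<open>Since b n / h n = 1 / h (n - 1) for n > 0 and b 0 = 0, this agrees with rnk.\<close>

definition r :: "nat \<Rightarrow> nat \<Rightarrow> real" where
  "r n k = d k * b n / h n * poly (P n) (\<tau> k) * poly (P (n - 1)) (\<tau> k)"

lemma r_0: "r 0 k = 0"
  by (simp add: r_def b_def)

lemma pearson_pCons:
  "L (pCons e f) - L (pderiv (pCons e f)) - (\<Sum>k\<in>K. d k * poly (pCons e f) (\<tau> k))
    = \<alpha> * L f + e * c"
proof -
  have "[:\<alpha> + 1, -1:] * f + pCons 0 (pderiv f) = smult \<alpha> f - pCons e f + smult e 1 + pderiv (pCons e f)"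
    by (rule poly_eqI) (simp add: pderiv_pCons coeff_pCons' algebra_simps)
  then have "\<alpha> * L f - L (pCons e f) + e * L 1 + L (pderiv (pCons e f))
      = - (\<Sum>k\<in>K. d k * \<tau> k * poly f (\<tau> k))"
    using pearson[of f] by (simp only: L_add L_diff L_smult)
  moreover have "(\<Sum>k\<in>K. d k * poly (pCons e f) (\<tau> k))
      = e * (\<Sum>k\<in>K. d k) + (\<Sum>k\<in>K. d k * \<tau> k * poly f (\<tau> k))"
    by (simp add: algebra_simps sum.distrib sum_distrib_left)
  ultimately show ?thesis
    by (simp add: c_def algebra_simps)
qed

lemma a_eq: "a n = 2 * real n + 1 + \<alpha> + (\<Sum>k\<in>K. \<tau> k * R n k)"
proof -
  define S where "S = (\<Sum>k\<in>K. d k * \<tau> k * (poly (P n) (\<tau> k))\<^sup>2)"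
  have "[:\<alpha> + 1, -1:] * (P n * P n) + pCons 0 (pderiv (P n * P n))
      = smult (\<alpha> + 1) (P n * P n) - pCons 0 (P n * P n) + smult 2 (P n * pCons 0 (pderiv (P n)))"
    by (rule poly_ext) (simp add: pderiv_mult algebra_simps)
  then have "(\<alpha> + 1) * h n - L (pCons 0 (P n * P n)) + 2 * (real n * h n) = - S"
    using pearson[of "P n * P n"]
    by (simp only: L_add L_diff L_smult L_P_mult_pCons_0_pderiv h_def[symmetric])
      (simp add: S_def power2_eq_square)
  moreover have "(\<Sum>k\<in>K. \<tau> k * R n k) = S / h n"
    unfolding S_def R_def sum_divide_distrib by (rule sum.cong) simp_all
  ultimately show ?thesis
    using h_pos[of n] by (simp add: a_def field_simps)
qed

lemma r_Suc: "r (Suc n) k = (\<tau> k - (\<Sum>j\<in>K. \<tau> j * R n j) - 2 * real n - 1 - \<alpha>) * R n k - r n k"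
proof -
  have "r (Suc n) k = d k / h n * poly (P (Suc n)) (\<tau> k) * poly (P n) (\<tau> k)"
    using h_pos[of n] h_pos[of "Suc n"] by (simp add: r_def b_def)
  also have "\<dots> = (\<tau> k - a n) * R n k - r n k"
    using h_pos[of n] by (simp add: three_term_recurrence R_def r_def power2_eq_square field_simps)
  finally show ?thesis
    by (simp add: a_eq)
qed

lemma r_squared: "(r n k)\<^sup>2 = R n k * R (n - 1) k * b n"
  using h_pos[of n] h_pos[of "n - 1"]
  by (cases "n = 0") (simp_all add: r_def R_def b_def power2_eq_square field_simps)

lemma one_minus_sum_R: "1 - (\<Sum>k\<in>K. R n k) = poly (P n) 0 * \<sigma> n / h n"
proof -
  define e where "e = poly (P n) 0"
  define Q where "Q = synthetic_div (P n) 0"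
  have eval: "poly (P n) x = e + x * poly Q x" for x
    unfolding e_def Q_def by (rule P_eval)
  have square: "P n * P n = pCons (e * e) (Q * (P n + [:e:]))"
    by (rule poly_ext) (simp add: eval algebra_simps)
  have "h n - L (pderiv (P n * P n)) - (\<Sum>k\<in>K. d k * (poly (P n) (\<tau> k))\<^sup>2)
      = \<alpha> * L (Q * (P n + [:e:])) + e * e * c"
    using pearson_pCons[of "e * e" "Q * (P n + [:e:])", folded square]
    by (simp add: h_def power2_eq_square)
  moreover have "L (pderiv (P n * P n)) = 0"
    unfolding pderiv_mult L_add using L_P_mult_eq_0[OF deg_below_pderiv[OF deg_below_P[of n]]] by simp
  moreover have "L (Q * (P n + [:e:])) = e * L Q"
    using L_P_mult_eq_0[OF deg_below_synthetic_div_P[of n]]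
    by (simp add: Q_def distrib_left L_add L_smult mult.commute)
  ultimately have "h n - (\<Sum>k\<in>K. d k * (poly (P n) (\<tau> k))\<^sup>2) = e * \<sigma> n"
    by (simp add: \<sigma>_def e_def Q_def algebra_simps)
  moreover have "(\<Sum>k\<in>K. R n k) = (\<Sum>k\<in>K. d k * (poly (P n) (\<tau> k))\<^sup>2) / h n"
    unfolding R_def sum_divide_distrib by (rule sum.cong) simp_all
  ultimately show ?thesis
    using h_pos[of n] by (simp add: e_def field_simps)
qed

lemma sum_r:
  "0 < n \<Longrightarrow> (\<Sum>k\<in>K. r n k) = (\<Sum>k\<in>K. d k * poly (P n) (\<tau> k) * poly (P (n - 1)) (\<tau> k)) / h (n - 1)"
  using h_pos[of n] unfolding r_def b_def sum_divide_distrib by (intro sum.cong) simp_all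

lemma poly_P_0_mult_\<sigma>_pred:
  assumes "0 < n"
  shows "poly (P n) 0 * \<sigma> (n - 1) = - (real n + \<alpha> + (\<Sum>k\<in>K. r n k)) * h (n - 1)"
proof -
  define e where "e j = poly (P j) 0" for j
  define Q where "Q j = synthetic_div (P j) 0" for j
  have eval: "poly (P j) x = e j + x * poly (Q j) x" for j x
    unfolding e_def Q_def by (rule P_eval)
  have product: "P n * P (n - 1) = pCons (e n * e (n - 1)) (Q n * P (n - 1) + smult (e n) (Q (n - 1)))"
    by (rule poly_ext) (simp add: eval algebra_simps)
  have "L (P n * P (n - 1)) - L (pderiv (P n * P (n - 1)))
      - (\<Sum>k\<in>K. d k * poly (P n) (\<tau> k) * poly (P (n - 1)) (\<tau> k))
      = \<alpha> * L (Q n * P (n - 1) + smult (e n) (Q (n - 1))) + e n * e (n - 1) * c"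
    using pearson_pCons[of "e n * e (n - 1)" "Q n * P (n - 1) + smult (e n) (Q (n - 1))", folded product]
    by (simp add: mult.assoc)
  moreover have "L (P n * P (n - 1)) = 0" "L (P n * pderiv (P (n - 1))) = 0"
    using assms deg_below_mono[OF deg_below_P[of "n - 1"], of n]
      deg_below_mono[OF deg_below_pderiv[OF deg_below_P[of "n - 1"]], of n]
    by (simp_all add: L_P_mult_eq_0)
  moreover have "L (pderiv (P n * P (n - 1))) = real n * h (n - 1)"
    using L_P_pred_mult_pderiv[OF assms] \<open>L (P n * pderiv (P (n - 1))) = 0\<close>
    by (simp add: pderiv_mult L_add mult.commute)
  moreover have "L (Q n * P (n - 1)) = h (n - 1)"
    using L_P_mult_eq_coeff[of "Q n" "n - 1"] assms deg_below_synthetic_div_P[of n]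
      coeff_synthetic_div_P[OF assms]
    by (simp add: Q_def mult.commute)
  ultimately show ?thesis
    using sum_r[OF assms] h_pos[of "n - 1"]
    by (simp add: \<sigma>_def e_def Q_def L_add L_smult field_simps)
qed

lemma poly_P_pred_0_mult_\<sigma>:
  assumes "0 < n"
  shows "poly (P (n - 1)) 0 * \<sigma> n = - (real n + (\<Sum>k\<in>K. r n k)) * h (n - 1)"
  using poly_P_0_mult_\<sigma>_pred[OF assms] L_synthetic_div_P_casoratian[OF assms]
  by (simp add: \<sigma>_def algebra_simps)

lemma sum_r_product:
  assumes "0 < n"
  shows "(real n + \<alpha> + (\<Sum>k\<in>K. r n k)) * (real n + (\<Sum>k\<in>K. r n k))
    = b n * (1 - (\<Sum>k\<in>K. R n k)) * (1 - (\<Sum>k\<in>K. R (n - 1) k))"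
proof -
  have "b n * (1 - (\<Sum>k\<in>K. R n k)) * (1 - (\<Sum>k\<in>K. R (n - 1) k))
      = (poly (P n) 0 * \<sigma> (n - 1)) * (poly (P (n - 1)) 0 * \<sigma> n) / (h (n - 1) * h (n - 1))"
    using assms h_pos[of n] h_pos[of "n - 1"] by (simp add: one_minus_sum_R b_def field_simps)
  also have "\<dots> = (real n + \<alpha> + (\<Sum>k\<in>K. r n k)) * (real n + (\<Sum>k\<in>K. r n k))"
    unfolding poly_P_0_mult_\<sigma>_pred[OF assms] poly_P_pred_0_mult_\<sigma>[OF assms]
    using h_pos[of "n - 1"] by (simp add: field_simps)
  finally show ?thesis ..
qed

end


section \<open>The Laguerre weight with jumps\<close>

lemma integral_pos_if_pos_on_interval:
  fixes f :: "real \<Rightarrow> real"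
  assumes "integrable lborel f" and "AE x in lborel. 0 \<le> f x"
    and "AE x in lborel. x \<in> {c<..<d} \<longrightarrow> 0 < f x" and "c < d"
  shows "0 < integral\<^sup>L lborel f"
proof -
  have "integral\<^sup>L lborel f \<noteq> 0"
  proof
    assume "integral\<^sup>L lborel f = 0"
    then have "AE x in lborel. f x = 0"
      using integral_nonneg_eq_0_iff_AE[OF assms(1,2)] by simp
    with assms(3) have "AE x in lborel. x \<notin> {c<..<d}"
      by eventually_elim auto
    then have "emeasure lborel {c<..<d} = 0"
      by (subst (asm) AE_iff_measurable[of "{c<..<d}"]) auto
    then show False
      using assms(4) by simp
  qed
  moreover have "0 \<le> integral\<^sup>L lborel f"
    by (rule integral_nonneg_AE[OF assms(2)])
  ultimately show ?thesis
    by simp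
qed

lemma set_integrable_powr_exp:
  assumes "-1 < s"
  shows "set_integrable lborel {0..} (\<lambda>x::real. x powr s * exp (- x))"
proof -
  have "Gamma (s + 1) = (\<integral>\<^sup>+x. ennreal (indicator {0..} x * x powr (s + 1 - 1) / exp x) \<partial>lborel)"
    by (rule Gamma_conv_nn_integral_real) (use assms in auto)
  then have "(\<integral>\<^sup>+x. ennreal (indicator {0..} x * (x powr s * exp (- x))) \<partial>lborel) < \<infinity>"
    by (simp add: exp_minus field_simps) (metis ennreal_less_top)
  then show ?thesis
    unfolding set_integrable_def by (intro integrableI_nonneg) (auto simp: indicator_def)
qed

lemma poly_mult_powr_exp:
  assumes "0 \<le> x"
  shows "poly p x * (x powr s * exp (- x)) = (\<Sum>j\<le>degree p. coeff p j * (x powr (s + real j) * exp (- x)))"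
proof (cases "x = 0")
  case False
  have "poly p x * (x powr s * exp (- x)) = (\<Sum>j\<le>degree p. coeff p j * ((x ^ j * x powr s) * exp (- x)))"
    by (simp add: poly_altdef sum_distrib_left mult_ac)
  also have "\<dots> = (\<Sum>j\<le>degree p. coeff p j * (x powr (s + real j) * exp (- x)))"
    using assms False by (simp add: powr_add powr_realpow mult_ac)
  finally show ?thesis .
qed simp

lemma set_integrable_poly_w0:
  assumes "-1 < \<alpha>" and "0 \<le> a"
  shows "set_integrable lborel {a..} (\<lambda>x. poly p x * w0 \<alpha> x)"
proof -
  have "set_integrable lborel {0..} (\<lambda>x. coeff p j * (x powr (\<alpha> + real j) * exp (- x)))" for j
    using set_integrable_powr_exp[of "\<alpha> + real j"] assms(1) by simp
  then have "set_integrable lborel {0..} (\<lambda>x. \<Sum>j\<le>degree p. coeff p j * (x powr (\<alpha> + real j) * exp (- x)))"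
    unfolding set_integrable_def scaleR_sum_right by (intro Bochner_Integration.integrable_sum)
  then have "set_integrable lborel {0..} (\<lambda>x. poly p x * w0 \<alpha> x)"
    by (rule set_integrable_cong[THEN iffD1, rotated -1]) (simp_all add: w0_def poly_mult_powr_exp)
  then show ?thesis
    by (rule set_integrable_subset) (use assms(2) in auto)
qed

lemma tendsto_poly_powr_exp_at_top: "((\<lambda>x. poly p x * (x powr s * exp (- x))) \<longlongrightarrow> 0) at_top"
  for s :: real
proof -
  have "((\<lambda>x. \<Sum>j\<le>degree p. coeff p j * (x powr (s + real j) * exp (- x)))
      \<longlongrightarrow> (\<Sum>j\<le>degree p. coeff p j * 0)) at_top"
    by (intro tendsto_intros) real_asymp
  moreover have "\<forall>\<^sub>F x in at_top. (\<Sum>j\<le>degree p. coeff p j * (x powr (s + real j) * exp (- x)))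
      = poly p x * (x powr s * exp (- x))"
    using eventually_ge_at_top[of 0] by eventually_elim (simp add: poly_mult_powr_exp)
  ultimately show ?thesis
    by (simp add: tendsto_cong)
qed

lemma has_real_derivative_poly_powr_exp:
  assumes "0 < x"
  shows "((\<lambda>x. poly g x * (x powr (\<alpha> + 1) * exp (- x))) has_real_derivative
    poly ([:\<alpha> + 1, -1:] * g + pCons 0 (pderiv g)) x * w0 \<alpha> x) (at x)"
proof -
  have "((\<lambda>x. poly g x * (x powr (\<alpha> + 1) * exp (- x))) has_real_derivative
      poly (pderiv g) x * (x powr (\<alpha> + 1) * exp (- x))
      + poly g x * ((\<alpha> + 1) * x powr (\<alpha> + 1 - 1) * exp (- x) - x powr (\<alpha> + 1) * exp (- x))) (at x)"
    using assms by (auto intro!: derivative_eq_intros has_real_derivative_powr simp: algebra_simps)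
  moreover have "x powr (\<alpha> + 1) = x * x powr \<alpha>"
    using assms by (simp add: powr_add)
  ultimately show ?thesis
    by (simp add: w0_def algebra_simps)
qed

lemma set_integral_poly_w0_Ioi:
  assumes "-1 < \<alpha>" and "0 \<le> a"
  shows "(LINT x:{a..}|lborel. poly p x * w0 \<alpha> x) = (LINT x:{a<..}|lborel. poly p x * w0 \<alpha> x)"
proof (rule set_integral_cong_set)
  have meas: "set_borel_measurable lborel A (\<lambda>x. poly p x * w0 \<alpha> x)" if "A \<in> sets lborel" "A \<subseteq> {a..}" for A
    using set_integrable_subset[OF set_integrable_poly_w0[OF assms] that]
    unfolding set_integrable_def set_borel_measurable_def by (rule borel_measurable_integrable)
  show "set_borel_measurable lborel {a..} (\<lambda>x. poly p x * w0 \<alpha> x)"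
    "set_borel_measurable lborel {a<..} (\<lambda>x. poly p x * w0 \<alpha> x)"
    by (auto intro: meas)
  show "AE x in lborel. (x \<in> {a<..}) = (x \<in> {a..})"
    using AE_lborel_singleton[of a] by eventually_elim auto
qed

lemma integral_pearson_w0:
  assumes "-1 < \<alpha>" and "0 \<le> a"
  shows "(LINT x:{a..}|lborel. poly ([:\<alpha> + 1, -1:] * g + pCons 0 (pderiv g)) x * w0 \<alpha> x)
    = - (a * w0 \<alpha> a * poly g a)"
proof -
  define F where "F x = poly g x * (x powr (\<alpha> + 1) * exp (- x))" for x
  define f where "f x = poly ([:\<alpha> + 1, -1:] * g + pCons 0 (pderiv g)) x * w0 \<alpha> x" for x
  have "(LBINT x=ereal a..\<infinity>. f x) = 0 - F a"
  proof (rule interval_integral_FTC_integrable)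
    fix x assume "ereal a < ereal x"
    then have "0 < x"
      using assms(2) by simp
    then show "(F has_vector_derivative f x) (at x)"
      unfolding F_def f_def has_real_derivative_iff_has_vector_derivative[symmetric]
      by (rule has_real_derivative_poly_powr_exp)
    show "isCont f x"
      unfolding f_def w0_def using \<open>0 < x\<close> by (intro continuous_intros) auto
  next
    show "set_integrable lborel (einterval (ereal a) \<infinity>) f"
      unfolding f_def einterval_eq using set_integrable_poly_w0[OF assms]
      by (rule set_integrable_subset) auto
    have "continuous_on {0..} F"
      unfolding F_def using assms(1) by (intro continuous_intros continuous_on_powr') auto
    then have "(F \<longlongrightarrow> F a) (at_right a)"
      using assms(2) by (auto simp: continuous_on_def intro: tendsto_within_subset)
    then show "((F \<circ> real_of_ereal) \<longlongrightarrow> F a) (at_right (ereal a))"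
      unfolding ereal_tendsto_simps .
    show "((F \<circ> real_of_ereal) \<longlongrightarrow> 0) (at_left \<infinity>)"
      unfolding ereal_tendsto_simps F_def by (rule tendsto_poly_powr_exp_at_top)
  qed simp
  moreover have "F a = a * w0 \<alpha> a * poly g a"
    using assms(2) by (simp add: F_def w0_def powr_add)
  ultimately show ?thesis
    unfolding set_integral_poly_w0_Ioi[OF assms] by (simp add: f_def interval_integral_to_infinity_eq)
qed

locale jump_weight =
  fixes \<alpha> :: real and m :: nat and \<omega> t :: "nat \<Rightarrow> real"
  assumes alpha: "-1 < \<alpha>"
    and t_pos: "0 < t 1"
    and t_mono: "\<And>k. 1 \<le> k \<Longrightarrow> k < m \<Longrightarrow> t k < t (k + 1)"
    and \<omega>_nonneg: "\<And>l. l \<le> m \<Longrightarrow> 0 \<le> (\<Sum>k=0..l. \<omega> k)"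
    and \<omega>_nontrivial: "\<exists>l\<le>m. 0 < (\<Sum>k=0..l. \<omega> k)"
begin

lemma t_less: "1 \<le> i \<Longrightarrow> i < j \<Longrightarrow> j \<le> m \<Longrightarrow> t i < t j"
proof (induction j)
  case (Suc j)
  then show ?case
    using t_mono[of j] by (cases "i = j") auto
qed simp

lemma t_le: "1 \<le> i \<Longrightarrow> i \<le> j \<Longrightarrow> j \<le> m \<Longrightarrow> t i \<le> t j"
  using t_less[of i j] by (cases "i = j") auto

lemma t_gt_0: "1 \<le> k \<Longrightarrow> k \<le> m \<Longrightarrow> 0 < t k"
  using t_le[of 1 k] t_pos by simp

lemma t_nonneg: "k \<in> {1..m} \<Longrightarrow> 0 \<le> t k"
  using t_gt_0[of k] by simp

lemma weight_eq_partial_sum: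
  assumes "l \<le> m" and "l = 0 \<or> t l \<le> x" and "l = m \<or> x < t (l + 1)"
  shows "weight \<alpha> m \<omega> t x = w0 \<alpha> x * (\<Sum>k=0..l. \<omega> k)"
proof -
  have "\<omega> k * heaviside (x - t k) = (if k \<le> l then \<omega> k else 0)" if "k \<in> {1..m}" for k
  proof (cases "k \<le> l")
    case True
    then show ?thesis
      using t_le[of k l] that assms(1,2) by (auto simp: heaviside_def)
  next
    case False
    then show ?thesis
      using t_le[of "l + 1" k] that assms(1,3) by (auto simp: heaviside_def)
  qed
  then have "(\<Sum>k=1..m. \<omega> k * heaviside (x - t k)) = (\<Sum>k\<in>{1..m}. if k \<in> {..l} then \<omega> k else 0)"
    by (intro sum.cong) auto
  also have "\<dots> = (\<Sum>k\<in>{1..m} \<inter> {..l}. \<omega> k)"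
    by (rule sum.inter_restrict[symmetric]) simp
  also have "{1..m} \<inter> {..l} = {1..l}"
    using assms(1) by auto
  finally show ?thesis
    by (simp add: weight_def sum.atLeast_Suc_atMost)
qed

lemma weight_nonneg:
  assumes "0 \<le> x"
  shows "0 \<le> weight \<alpha> m \<omega> t x"
proof -
  define l where "l = Max (insert 0 {k\<in>{1..m}. t k \<le> x})"
  have l_in: "l \<in> insert 0 {k\<in>{1..m}. t k \<le> x}"
    unfolding l_def by (rule Max_in) simp_all
  have l_max: "k \<le> l" if "k \<in> {1..m}" "t k \<le> x" for k
    unfolding l_def using that by (intro Max_ge) simp_all
  have "l \<le> m"
    using l_in by auto
  moreover have "l = m \<or> x < t (l + 1)"
    using l_max[of "l + 1"] \<open>l \<le> m\<close> by fastforce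
  moreover have "l = 0 \<or> t l \<le> x"
    using l_in by auto
  ultimately show ?thesis
    using weight_eq_partial_sum \<omega>_nonneg[of l] by (simp add: w0_def)
qed

lemma weight_pos_on_interval: "\<exists>c d. 0 \<le> c \<and> c < d \<and> (\<forall>x\<in>{c<..<d}. 0 < weight \<alpha> m \<omega> t x)"
proof -
  obtain l where "l \<le> m" and pos: "0 < (\<Sum>k=0..l. \<omega> k)"
    using \<omega>_nontrivial by blast
  define c where "c = (if l = 0 then 0 else t l)"
  define d where "d = (if l = m then c + 1 else t (l + 1))"
  have "0 \<le> c"
    using t_gt_0[of l] \<open>l \<le> m\<close> by (cases "l = 0") (simp_all add: c_def)
  moreover have "c < d"
    using t_pos t_mono[of l] \<open>l \<le> m\<close> by (auto simp: c_def d_def)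
  moreover have "0 < weight \<alpha> m \<omega> t x" if "c < x" "x < d" for x
  proof -
    have "weight \<alpha> m \<omega> t x = w0 \<alpha> x * (\<Sum>k=0..l. \<omega> k)"
      using that \<open>l \<le> m\<close> by (intro weight_eq_partial_sum) (auto simp: c_def d_def split: if_splits)
    moreover have "0 < w0 \<alpha> x"
      using that \<open>0 \<le> c\<close> by (simp add: w0_def)
    ultimately show ?thesis
      using pos by simp
  qed
  ultimately show ?thesis
    by (intro exI[of _ c] exI[of _ d]) auto
qed

lemma indicator_weight_eq:
  "indicator {0..} x *\<^sub>R (f x * weight \<alpha> m \<omega> t x) =
     \<omega> 0 * (indicator {0..} x *\<^sub>R (f x * w0 \<alpha> x)) +
     (\<Sum>k=1..m. \<omega> k * (indicator {t k..} x *\<^sub>R (f x * w0 \<alpha> x)))"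
proof (cases "0 \<le> x")
  case True
  have "heaviside (x - a) = indicator {a..} x" for a
    by (simp add: heaviside_def indicator_def)
  then have "f x * weight \<alpha> m \<omega> t x
      = \<omega> 0 * (f x * w0 \<alpha> x) + (\<Sum>k=1..m. \<omega> k * (indicator {t k..} x * (f x * w0 \<alpha> x)))"
    unfolding weight_def distrib_left sum_distrib_left
    by (intro arg_cong2[where f = "(+)"] sum.cong) (simp_all add: mult_ac)
  then show ?thesis
    using True by simp
next
  case False
  then have "indicator {t k..} x = (0::real)" if "k \<in> {1..m}" for k
    using t_gt_0[of k] that by (auto simp: indicator_def)
  then show ?thesis
    using False by simp
qed

lemma integrable_indicator_poly_w0:
  "0 \<le> a \<Longrightarrow> integrable lborel (\<lambda>x. indicator {a..} x *\<^sub>R (poly p x * w0 \<alpha> x))"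
  using set_integrable_poly_w0[OF alpha] unfolding set_integrable_def .

lemma set_integrable_poly_weight: "set_integrable lborel {0..} (\<lambda>x. poly p x * weight \<alpha> m \<omega> t x)"
  unfolding set_integrable_def indicator_weight_eq
proof (intro Bochner_Integration.integrable_add Bochner_Integration.integrable_sum integrable_mult_right)
  show "integrable lborel (\<lambda>x. indicator {0..} x *\<^sub>R (poly p x * w0 \<alpha> x))"
    by (rule integrable_indicator_poly_w0) simp
  show "integrable lborel (\<lambda>x. indicator {t k..} x *\<^sub>R (poly p x * w0 \<alpha> x))" if "k \<in> {1..m}" for k
    using that by (intro integrable_indicator_poly_w0 t_nonneg)
qed

lemma wint_poly_eq:
  "wint \<alpha> m \<omega> t (poly p) = \<omega> 0 * (LINT x:{0..}|lborel. poly p x * w0 \<alpha> x) +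
     (\<Sum>k=1..m. \<omega> k * (LINT x:{t k..}|lborel. poly p x * w0 \<alpha> x))"
proof -
  have "wint \<alpha> m \<omega> t (poly p) = (LINT x|lborel. \<omega> 0 * (indicator {0..} x *\<^sub>R (poly p x * w0 \<alpha> x)) +
     (\<Sum>k=1..m. \<omega> k * (indicator {t k..} x *\<^sub>R (poly p x * w0 \<alpha> x))))"
    unfolding wint_def set_lebesgue_integral_def indicator_weight_eq ..
  also have "\<dots> = \<omega> 0 * (LINT x|lborel. indicator {0..} x *\<^sub>R (poly p x * w0 \<alpha> x)) +
     (\<Sum>k=1..m. \<omega> k * (LINT x|lborel. indicator {t k..} x *\<^sub>R (poly p x * w0 \<alpha> x)))"
    using integrable_indicator_poly_w0 t_nonneg
    by (subst Bochner_Integration.integral_add) (auto simp: Bochner_Integration.integral_sum)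
  finally show ?thesis
    by (simp add: set_lebesgue_integral_def)
qed

lemma wint_poly_add: "wint \<alpha> m \<omega> t (poly (p + q)) = wint \<alpha> m \<omega> t (poly p) + wint \<alpha> m \<omega> t (poly q)"
  unfolding wint_def poly_add distrib_right
  by (rule set_integral_add(2)[OF set_integrable_poly_weight set_integrable_poly_weight])

lemma wint_poly_pos:
  assumes "p \<noteq> 0" and nonneg: "\<And>x. 0 \<le> x \<Longrightarrow> 0 \<le> poly p x"
  shows "0 < wint \<alpha> m \<omega> t (poly p)"
proof -
  define f where "f = (\<lambda>x. indicator {0..} x *\<^sub>R (poly p x * weight \<alpha> m \<omega> t x))"
  obtain c d where "0 \<le> c" "c < d" and weight_pos: "\<forall>x\<in>{c<..<d}. 0 < weight \<alpha> m \<omega> t x"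
    using weight_pos_on_interval by blast
  have "integrable lborel f"
    using set_integrable_poly_weight[of p] by (simp add: f_def set_integrable_def)
  moreover have "AE x in lborel. 0 \<le> f x"
    using nonneg weight_nonneg by (auto simp: f_def indicator_def)
  moreover have "AE x in lborel. x \<in> {c<..<d} \<longrightarrow> 0 < f x"
  proof -
    have "AE x in lborel. \<forall>y\<in>{x. poly p x = 0}. x \<noteq> y"
      by (subst AE_finite_all[OF poly_roots_finite[OF \<open>p \<noteq> 0\<close>]]) (simp add: AE_lborel_singleton)
    then show ?thesis
    proof eventually_elim
      case (elim x)
      show ?case
      proof
        assume "x \<in> {c<..<d}"
        then have "0 < weight \<alpha> m \<omega> t x" "0 \<le> x"
          using weight_pos \<open>0 \<le> c\<close> by auto
        moreover have "poly p x \<noteq> 0"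
          using elim by auto
        ultimately show "0 < f x"
          using nonneg[of x] by (simp add: f_def)
      qed
    qed
  qed
  ultimately have "0 < integral\<^sup>L lborel f"
    using \<open>c < d\<close> by (rule integral_pos_if_pos_on_interval)
  then show ?thesis
    by (simp add: wint_def set_lebesgue_integral_def f_def)
qed

lemma wint_pearson:
  "wint \<alpha> m \<omega> t (poly ([:\<alpha> + 1, -1:] * g + pCons 0 (pderiv g)))
    = - (\<Sum>k\<in>{1..m}. \<omega> k * w0 \<alpha> (t k) * t k * poly g (t k))"
proof -
  define G where "G = [:\<alpha> + 1, -1:] * g + pCons 0 (pderiv g)"
  have G_integral: "(LINT x:{a..}|lborel. poly G x * w0 \<alpha> x) = - (a * w0 \<alpha> a * poly g a)" if "0 \<le> a" for a
    unfolding G_def by (rule integral_pearson_w0[OF alpha that])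
  show ?thesis
    unfolding G_def[symmetric] wint_poly_eq using t_nonneg
    by (simp add: G_integral) (simp add: sum_negf mult_ac)
qed

end

locale jump_weight_OPs = jump_weight +
  fixes P :: "nat \<Rightarrow> real poly"
  assumes OPs: "monic_OPs \<alpha> m \<omega> t P"

sublocale jump_weight_OPs \<subseteq> laguerre_type_functional "\<lambda>p. wint \<alpha> m \<omega> t (poly p)" P \<alpha> "{1..m}"
  "\<lambda>k. \<omega> k * w0 \<alpha> (t k)" t
proof
  show "wint \<alpha> m \<omega> t (poly (smult c p)) = c * wint \<alpha> m \<omega> t (poly p)" for c p
    by (simp add: wint_def mult.assoc)
  show "degree (P n) = n" "lead_coeff (P n) = 1" for n
    using OPs unfolding monic_OPs_def by blast+
  show "wint \<alpha> m \<omega> t (poly (P n * monom 1 j)) = 0" if "j < n" for j n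
  proof -
    have "poly (P n * monom 1 j) = (\<lambda>x. poly (P n) x * x ^ j)"
      by (simp add: fun_eq_iff poly_monom)
    then show ?thesis
      using OPs that by (simp add: monic_OPs_def)
  qed
  show "wint \<alpha> m \<omega> t (poly (p + q)) = wint \<alpha> m \<omega> t (poly p) + wint \<alpha> m \<omega> t (poly q)" for p q
    by (rule wint_poly_add)
  show "0 < wint \<alpha> m \<omega> t (poly p)" if "p \<noteq> 0" "\<And>x. 0 \<le> x \<Longrightarrow> 0 \<le> poly p x" for p
    using that by (rule wint_poly_pos)
  show "wint \<alpha> m \<omega> t (poly ([:\<alpha> + 1, -1:] * g + pCons 0 (pderiv g)))
      = - (\<Sum>k\<in>{1..m}. \<omega> k * w0 \<alpha> (t k) * t k * poly g (t k))" for g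
    by (rule wint_pearson)
qed

lemma elimination_identities:
  fixes R R' r :: "nat \<Rightarrow> real"
  assumes "1 \<le> m" and "\<beta> \<noteq> 0"
    and r_squared: "\<And>k. k \<in> {1..m} \<Longrightarrow> (r k)\<^sup>2 = R k * R' k * \<beta>"
    and R'_nonzero: "\<And>k. k \<in> {1..m} \<Longrightarrow> R' k \<noteq> 0" and "r 1 \<noteq> 0"
    and "1 - (\<Sum>k=1..m. R' k) \<noteq> 0"
    and X_eq: "X = \<beta> * (1 - (\<Sum>k=1..m. R k)) * (1 - (\<Sum>k=1..m. R' k))"
  shows "1 / R 1 = 1 + R' 1 / (r 1)\<^sup>2 * ((\<Sum>k=2..m. (r k)\<^sup>2 / R' k) + X / (1 - (\<Sum>k=1..m. R' k)))"
    and "\<And>k. 2 \<le> k \<Longrightarrow> k \<le> m \<Longrightarrow> R k = R' 1 / R' k * ((r k)\<^sup>2 / (r 1)\<^sup>2) * R 1"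
proof -
  have r1: "(r 1)\<^sup>2 = R 1 * R' 1 * \<beta>"
    using r_squared[of 1] assms(1) by simp
  then have "R 1 \<noteq> 0"
    using \<open>r 1 \<noteq> 0\<close> by auto
  have "R' 1 \<noteq> 0"
    using R'_nonzero[of 1] assms(1) by simp
  have "(\<Sum>k=2..m. (r k)\<^sup>2 / R' k) = \<beta> * (\<Sum>k=2..m. R k)"
    unfolding sum_distrib_left using r_squared R'_nonzero by (intro sum.cong) (auto simp: field_simps)
  moreover have "(\<Sum>k=1..m. R k) = R 1 + (\<Sum>k=2..m. R k)"
    using assms(1) by (simp add: sum.atLeast_Suc_atMost numeral_2_eq_2)
  moreover have "X / (1 - (\<Sum>k=1..m. R' k)) = \<beta> * (1 - (\<Sum>k=1..m. R k))"
    using assms(6) unfolding X_eq by simp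
  ultimately show "1 / R 1 = 1 + R' 1 / (r 1)\<^sup>2 * ((\<Sum>k=2..m. (r k)\<^sup>2 / R' k) + X / (1 - (\<Sum>k=1..m. R' k)))"
    unfolding r1 using \<open>R 1 \<noteq> 0\<close> \<open>R' 1 \<noteq> 0\<close> \<open>\<beta> \<noteq> 0\<close> by (simp add: field_simps)
  fix k assume "2 \<le> k" "k \<le> m"
  then have "(r k)\<^sup>2 = R k * R' k * \<beta>" "R' k \<noteq> 0"
    using r_squared R'_nonzero by auto
  then show "R k = R' 1 / R' k * ((r k)\<^sup>2 / (r 1)\<^sup>2) * R 1"
    unfolding r1 using \<open>R 1 \<noteq> 0\<close> \<open>R' 1 \<noteq> 0\<close> \<open>\<beta> \<noteq> 0\<close> by (simp add: field_simps)
qed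

context jump_weight_OPs
begin

lemma hn_eq: "hn \<alpha> m \<omega> t P n = h n"
proof -
  have "poly (P n * P n) = (\<lambda>x. (poly (P n) x)\<^sup>2)"
    by (simp add: fun_eq_iff power2_eq_square)
  then show ?thesis
    by (simp add: hn_def h_def)
qed

lemma Rnk_eq: "Rnk \<alpha> m \<omega> t P = R"
  by (simp add: fun_eq_iff Rnk_def R_def hn_eq)

lemma rnk_eq: "rnk \<alpha> m \<omega> t P = r"
  using h_pos[THEN less_imp_neq] by (simp add: fun_eq_iff rnk_def r_def b_def hn_eq)

lemma R_0: "R 0 k = \<omega> k * t k powr \<alpha> * exp (- t k) / (LINT x:{0..}|lborel. weight \<alpha> m \<omega> t x)"
  unfolding R_def h_def by (simp add: P_0 wint_def w0_def)

lemma R_pred_identities: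
  assumes "1 \<le> m" and "0 < n" and "\<forall>k\<in>{1..m}. R (n - 1) k \<noteq> 0" and "r n 1 \<noteq> 0"
    and "1 - (\<Sum>k=1..m. R (n - 1) k) \<noteq> 0"
  shows "1 / R n 1 = 1 + R (n - 1) 1 / (r n 1)\<^sup>2 *
      ((\<Sum>k=2..m. (r n k)\<^sup>2 / R (n - 1) k)
       + (real n + \<alpha> + (\<Sum>k=1..m. r n k)) * (real n + (\<Sum>k=1..m. r n k)) / (1 - (\<Sum>k=1..m. R (n - 1) k)))"
    and "\<And>k. 2 \<le> k \<Longrightarrow> k \<le> m \<Longrightarrow> R n k = R (n - 1) 1 / R (n - 1) k * ((r n k)\<^sup>2 / (r n 1)\<^sup>2) * R n 1"
  using elimination_identities[where r = "r n" and R = "R n" and R' = "R (n - 1)",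
      OF assms(1) b_nonzero[OF assms(2)] _ _ assms(4,5) sum_r_product[OF assms(2)]]
    r_squared assms(3) by blast+

end

theorem lemma2p6:
  fixes \<alpha> :: real and m :: nat and t \<omega> :: "nat \<Rightarrow> real" and P :: "nat \<Rightarrow> real poly"
  defines "R \<equiv> Rnk \<alpha> m \<omega> t P" and "r \<equiv> rnk \<alpha> m \<omega> t P"
  assumes m: "m \<ge> 1"
    and alpha: "\<alpha> > -1"
    and t_pos: "0 < t 1"
    and t_mono: "\<And>k. 1 \<le> k \<Longrightarrow> k < m \<Longrightarrow> t k < t (k + 1)"
    and om_nonneg: "\<And>l. l \<le> m \<Longrightarrow> (\<Sum>k=0..l. \<omega> k) \<ge> 0"
    and om_nontriv: "\<exists>l\<le>m. (\<Sum>k=0..l. \<omega> k) > 0"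
    and OPs: "monic_OPs \<alpha> m \<omega> t P"
  shows
    "(\<forall>n k. 1 \<le> k \<and> k \<le> m \<longrightarrow>
        r (n + 1) k = (t k - (\<Sum>j=1..m. t j * R n j) - 2 * real n - 1 - \<alpha>) * R n k - r n k)
     \<and> (\<forall>n. n \<ge> 1 \<and> (\<forall>k\<in>{1..m}. R (n - 1) k \<noteq> 0) \<and> r n 1 \<noteq> 0
            \<and> 1 - (\<Sum>k=1..m. R (n - 1) k) \<noteq> 0 \<longrightarrow>
          1 / R n 1 = 1 + R (n - 1) 1 / (r n 1)\<^sup>2 *
             ((\<Sum>k=2..m. (r n k)\<^sup>2 / R (n - 1) k)
              + (real n + \<alpha> + (\<Sum>k=1..m. r n k)) * (real n + (\<Sum>k=1..m. r n k))
                / (1 - (\<Sum>k=1..m. R (n - 1) k)))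
        \<and> (\<forall>k. 2 \<le> k \<and> k \<le> m \<longrightarrow>
             R n k = R (n - 1) 1 / R (n - 1) k * ((r n k)\<^sup>2 / (r n 1)\<^sup>2) * R n 1))
     \<and> (\<forall>k. 1 \<le> k \<and> k \<le> m \<longrightarrow>
          R 0 k = \<omega> k * (t k) powr \<alpha> * exp (- t k) / (LINT x:{0..}|lborel. weight \<alpha> m \<omega> t x)
          \<and> r 0 k = 0)"
proof -
  interpret W: jump_weight_OPs \<alpha> m \<omega> t P
    using assms by unfold_locales auto
  have "R = W.R" and "r = W.r"
    unfolding R_def r_def by (rule W.Rnk_eq W.rnk_eq)+
  then show ?thesis
    using W.r_Suc W.R_pred_identities[OF m] W.R_0 W.r_0 by auto
qed

end
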